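(* Let $G$ and $H$ be nontrivial groups. Then $|\{x\in G*H: x^2\neq 1\}|=\max\{\aleph_0,|G|,|H|\}$. If moreover at least one of $G,H$ contains an involution, then also $|\{x\in G*H: x^2=1\}|=\max\{\aleph_0,|G|,|H|\}$.
   Context: An involution is an element of order $2$; $G*H$ is the free product. *)

theory Defs
  imports "HOL-Algebra.Group" "HOL-Library.Equipollence"
begin

text \<open>Free product G * H realised by reduced words: lists of letters from
  (carrier G - {1}) + (carrier H - {1}) in which consecutive letters come from
  different factors.\<close>

definition fp_letter :: "('a,'c) monoid_scheme \<Rightarrow> ('b,'d) monoid_scheme \<Rightarrow> 'a + 'b \<Rightarrow> bool" where
  "fp_letter G H x = (case x of Inl g \<Rightarrow> g \<in> carrier G \<and> g \<noteq> \<one>\<^bsub>G\<^esub>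
                               | Inr h \<Rightarrow> h \<in> carrier H \<and> h \<noteq> \<one>\<^bsub>H\<^esub>)"

fun fp_alt :: "('a + 'b) list \<Rightarrow> bool" where
  "fp_alt (Inl _ # Inl _ # _) = False"
| "fp_alt (Inr _ # Inr _ # _) = False"
| "fp_alt (_ # w) = fp_alt w"
| "fp_alt [] = True"

definition fp_reduced :: "('a,'c) monoid_scheme \<Rightarrow> ('b,'d) monoid_scheme \<Rightarrow> ('a + 'b) list \<Rightarrow> bool" where
  "fp_reduced G H w = ((\<forall>x\<in>set w. fp_letter G H x) \<and> fp_alt w)"

fun fp_cons :: "('a,'c) monoid_scheme \<Rightarrow> ('b,'d) monoid_scheme \<Rightarrow> 'a + 'b \<Rightarrow> ('a + 'b) list \<Rightarrow> ('a + 'b) list" where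
  "fp_cons G H (Inl g) (Inl g' # w) =
     (if g \<otimes>\<^bsub>G\<^esub> g' = \<one>\<^bsub>G\<^esub> then w else Inl (g \<otimes>\<^bsub>G\<^esub> g') # w)"
| "fp_cons G H (Inr h) (Inr h' # w) =
     (if h \<otimes>\<^bsub>H\<^esub> h' = \<one>\<^bsub>H\<^esub> then w else Inr (h \<otimes>\<^bsub>H\<^esub> h') # w)"
| "fp_cons G H x w = (if fp_letter G H x then x # w else w)"

definition free_product :: "('a,'c) monoid_scheme \<Rightarrow> ('b,'d) monoid_scheme \<Rightarrow> ('a + 'b) list monoid" where
  "free_product G H =
     \<lparr> carrier = {w. fp_reduced G H w},
       mult = (\<lambda>u v. foldr (fp_cons G H) u v),
       one = [] \<rparr>"

end

theory Submission
  imports Defs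
begin

text \<open>A nonempty reduced word whose first and last letters lie in different factors is cyclically
  reduced: its square is the doubled word, so it is not an involution. If \<open>t\<close> is an involution of
  a factor and the reduced word \<open>w\<close> ends outside that factor, then \<open>w t w\<inverse>\<close> is reduced and
  equal to its own inverse, hence an involution, and it determines \<open>w\<close>. The cyclically reduced
  words contain \<open>(a b)\<^sup>n\<close> for all \<open>n\<close> and a copy of every nontrivial element of either factor,
  which gives the lower bound \<open>max(\<aleph>\<^sub>0, |G|, |H|)\<close> for both sets; the upper bound holds because
  \<open>G * H\<close> consists of lists over \<open>G \<uplus> H\<close>, and an infinite alphabet has as many lists as
  letters.\<close>

unbundle cardinal_syntax

lemma lepoll_iff_card_of_ordLeq: "A \<lesssim> B \<longleftrightarrow> |A| \<le>o |B|"
  by (simp add: lepoll_def card_of_ordLeq[symmetric])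

lemma lepoll_total: "A \<lesssim> B \<or> B \<lesssim> A"
  unfolding lepoll_iff_card_of_ordLeq by (rule ordLeq_total[OF card_of_Well_order card_of_Well_order])

lemma lists_length_lepoll_infinite:
  assumes "infinite A"
  shows "{xs \<in> lists A. length xs = n} \<lesssim> A"
proof (induction n)
  case 0
  from assms obtain a where "a \<in> A" by fastforce
  have "{xs \<in> lists A. length xs = 0} = {[]}" by auto
  also have "\<dots> \<lesssim> insert a A" by (rule singleton_lepoll)
  also have "insert a A = A" using \<open>a \<in> A\<close> by blast
  finally show ?case .
next
  case (Suc n)
  have "{xs \<in> lists A. length xs = Suc n} \<lesssim> A \<times> {xs \<in> lists A. length xs = n}"
    by (rule subset_image_lepoll[where f = "\<lambda>(x, xs). x # xs"]) (auto simp: length_Suc_conv)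
  also have "\<dots> \<lesssim> A \<times> A" using Suc by (simp add: times_lepoll_mono)
  also have "A \<times> A \<lesssim> A"
    using card_of_Times_same_infinite[OF assms]
    unfolding lepoll_iff_card_of_ordLeq using ordIso_iff_ordLeq by blast
  finally show ?case .
qed

lemma lists_lepoll_infinite:
  assumes "infinite A"
  shows "lists A \<lesssim> A"
proof -
  have "lists A = (\<Union>n. {xs \<in> lists A. length xs = n})" by auto
  moreover have "|\<Union>n. {xs \<in> lists A. length xs = n}| \<le>o |A|"
    using assms lists_length_lepoll_infinite infinite_le_lepoll
    by (intro card_of_UNION_ordLeq_infinite) (auto simp: lepoll_iff_card_of_ordLeq)
  ultimately show ?thesis by (simp add: lepoll_iff_card_of_ordLeq)
qed

lemma Plus_lepoll_infinite:
  assumes "infinite M" "A \<lesssim> M" "B \<lesssim> M"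
  shows "A <+> B \<lesssim> M"
proof -
  have "A <+> B \<lesssim> M <+> M" using assms by (simp add: sum_lepoll_mono)
  moreover have "|M <+> M| =o |M|"
    by (rule card_of_Plus_infinite1[OF assms(1) ordLeq_refl[OF card_of_Card_order]])
  ultimately show ?thesis
    unfolding lepoll_iff_card_of_ordLeq using ordIso_iff_ordLeq ordLeq_transitive by blast
qed

lemma insert_lepoll_infinite:
  assumes "infinite X" "A \<lesssim> X"
  shows "insert a A \<lesssim> X"
proof -
  from assms(1) obtain x where "x \<in> X" by fastforce
  then have "{a} \<lesssim> X" using singleton_lepoll[of a x X] by (simp add: insert_absorb)
  have "insert a A \<lesssim> {a} <+> A"
    by (rule subset_image_lepoll[where f = "case_sum id id"]) force
  also have "\<dots> \<lesssim> X" using assms(1) \<open>{a} \<lesssim> X\<close> assms(2) by (rule Plus_lepoll_infinite)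
  finally show ?thesis .
qed

lemma eqpoll_if_between_lists_Plus:
  assumes "infinite M" "A \<lesssim> M" "B \<lesssim> M" "M \<lesssim> X" "X \<lesssim> lists (A <+> B)"
  shows "X \<approx> M"
proof (rule lepoll_antisym)
  have "lists (A <+> B) \<lesssim> lists M"
    using assms(1-3) by (intro lists_lepoll_mono Plus_lepoll_infinite)
  also have "\<dots> \<lesssim> M" using assms(1) by (rule lists_lepoll_infinite)
  finally show "X \<lesssim> M" using assms(5) lepoll_trans by blast
qed (fact assms(4))

lemma eqpoll_max_nat_if_between_lists_Plus:
  assumes "(UNIV::nat set) \<lesssim> X" "A \<lesssim> X" "B \<lesssim> X" "X \<lesssim> lists (A <+> B)"
  shows "X \<approx> (UNIV::nat set) \<or> X \<approx> A \<or> X \<approx> B"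
proof -
  consider "A \<lesssim> (UNIV::nat set)" "B \<lesssim> (UNIV::nat set)"
    | "(UNIV::nat set) \<lesssim> A" "B \<lesssim> A" | "(UNIV::nat set) \<lesssim> B" "A \<lesssim> B"
    by (meson lepoll_total lepoll_trans)
  then show ?thesis
  proof cases
    case 1
    then show ?thesis using assms eqpoll_if_between_lists_Plus[of UNIV] by blast
  next
    case 2
    then show ?thesis using assms eqpoll_if_between_lists_Plus[of A] infinite_le_lepoll by blast
  next
    case 3
    then show ?thesis using assms eqpoll_if_between_lists_Plus[of B] infinite_le_lepoll by blast
  qed
qed

abbreviation alternating :: "('a + 'b) list \<Rightarrow> bool" where
  "alternating \<equiv> successively (\<lambda>x y. isl x \<noteq> isl y)"

lemma fp_alt_iff_alternating: "fp_alt w \<longleftrightarrow> alternating w"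
  by (induction w rule: fp_alt.induct) auto

lemma fp_reduced_iff:
  "fp_reduced G H w \<longleftrightarrow> (\<forall>x\<in>set w. fp_letter G H x) \<and> alternating w"
  by (simp add: fp_reduced_def fp_alt_iff_alternating)

lemma carrier_free_product: "carrier (free_product G H) = {w. fp_reduced G H w}"
  and mult_free_product: "u \<otimes>\<^bsub>free_product G H\<^esub> v = foldr (fp_cons G H) u v"
  and one_free_product: "\<one>\<^bsub>free_product G H\<^esub> = []"
  by (simp_all add: free_product_def)

lemma carrier_free_product_subset_lists:
  "carrier (free_product G H) \<subseteq> lists (carrier G <+> carrier H)"
proof
  fix w assume "w \<in> carrier (free_product G H)"
  moreover have "x \<in> carrier G <+> carrier H" if "fp_letter G H x" for x
    using that by (cases x) (auto simp: fp_letter_def)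
  ultimately show "w \<in> lists (carrier G <+> carrier H)"
    by (auto simp: carrier_free_product fp_reduced_def)
qed

definition inv_letter ::
  "('a,'c) monoid_scheme \<Rightarrow> ('b,'d) monoid_scheme \<Rightarrow> 'a + 'b \<Rightarrow> 'a + 'b" where
  "inv_letter G H = map_sum (m_inv G) (m_inv H)"

definition inv_word ::
  "('a,'c) monoid_scheme \<Rightarrow> ('b,'d) monoid_scheme \<Rightarrow> ('a + 'b) list \<Rightarrow> ('a + 'b) list" where
  "inv_word G H w = rev (map (inv_letter G H) w)"

lemma inv_word_simps [simp]:
  "inv_word G H [] = []"
  "inv_word G H (x # w) = inv_word G H w @ [inv_letter G H x]"
  "inv_word G H (u @ v) = inv_word G H v @ inv_word G H u"
  by (simp_all add: inv_word_def)

lemma length_inv_word [simp]: "length (inv_word G H w) = length w"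
  by (simp add: inv_word_def)

lemma inv_word_eq_Nil_iff [simp]: "inv_word G H w = [] \<longleftrightarrow> w = []"
  by (simp add: inv_word_def)

lemma hd_inv_word: "w \<noteq> [] \<Longrightarrow> hd (inv_word G H w) = inv_letter G H (last w)"
  by (simp add: inv_word_def hd_rev last_map)

lemma isl_inv_letter [simp]: "isl (inv_letter G H x) = isl x"
  by (cases x) (simp_all add: inv_letter_def)

lemma alternating_inv_word [simp]: "alternating (inv_word G H w) \<longleftrightarrow> alternating w"
proof -
  have flip: "(\<lambda>x y. isl y \<noteq> isl x) = (\<lambda>x y. isl x \<noteq> isl y)" by auto
  show ?thesis
    by (simp only: inv_word_def successively_rev successively_map isl_inv_letter flip)
qed

lemma alternating_concat_replicate:
  assumes "isl x \<noteq> isl y"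
  shows "alternating (concat (replicate n [x, y]))"
proof (induction n)
  case (Suc n)
  then show ?case
    using assms by (cases n) (auto simp: successively_Cons)
qed simp

definition fp_cyclic_words ::
  "('a,'c) monoid_scheme \<Rightarrow> ('b,'d) monoid_scheme \<Rightarrow> bool \<Rightarrow> ('a + 'b) list set" where
  "fp_cyclic_words G H p =
     {w. fp_reduced G H w \<and> w \<noteq> [] \<and> isl (hd w) = p \<and> isl (last w) \<noteq> p}"

lemma nat_lepoll_fp_cyclic_words:
  assumes "fp_letter G H x" "fp_letter G H y" "isl x = p" "isl y \<noteq> p"
  shows "(UNIV::nat set) \<lesssim> fp_cyclic_words G H p"
  unfolding lepoll_def
proof (intro exI conjI)
  let ?f = "\<lambda>n. concat (replicate (Suc n) [x, y])"
  show "inj ?f"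
    by (rule injI) (drule arg_cong[of _ _ length], simp add: length_concat sum_list_replicate)
  show "range ?f \<subseteq> fp_cyclic_words G H p"
  proof (rule image_subsetI)
    fix n
    define w where "w = ?f n"
    have "alternating w"
      unfolding w_def using assms by (intro alternating_concat_replicate) simp
    moreover have "w \<noteq> []" "hd w = x" "set w = {x, y}"
      unfolding w_def by auto
    moreover have "last w = y"
      unfolding w_def by (simp flip: replicate_append_same)
    ultimately have "w \<in> fp_cyclic_words G H p"
      using assms by (auto simp: fp_cyclic_words_def fp_reduced_iff)
    then show "?f n \<in> fp_cyclic_words G H p"
      unfolding w_def .
  qed
qed

lemma fp_letters_lepoll_fp_cyclic_words:
  assumes "fp_letter G H x" "fp_letter G H y" "isl x = p" "isl y \<noteq> p"
  shows "{c. fp_letter G H c} \<lesssim> fp_cyclic_words G H p"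
  unfolding lepoll_def
proof (intro exI conjI)
  let ?f = "\<lambda>c. if isl c = p then [c, y] else [x, y, x, c]"
  show "inj_on ?f {c. fp_letter G H c}"
    by (auto simp: inj_on_def split: if_splits)
  show "?f ` {c. fp_letter G H c} \<subseteq> fp_cyclic_words G H p"
    using assms by (auto simp: fp_cyclic_words_def fp_reduced_iff)
qed

lemma carrier_lepoll_if_fp_letters_lepoll:
  assumes "group G" "group H" "{c. fp_letter G H c} \<lesssim> X" "infinite X"
  shows "carrier G \<lesssim> X" "carrier H \<lesssim> X"
proof -
  have "carrier G - {\<one>\<^bsub>G\<^esub>} \<lesssim> {c. fp_letter G H c}"
    unfolding lepoll_def by (intro exI[of _ Inl]) (auto simp: fp_letter_def)
  then have "insert \<one>\<^bsub>G\<^esub> (carrier G - {\<one>\<^bsub>G\<^esub>}) \<lesssim> X"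
    using assms(3,4) by (blast intro: insert_lepoll_infinite lepoll_trans)
  then show "carrier G \<lesssim> X"
    by (metis assms(1) group.is_monoid insert_Diff monoid.one_closed)
  have "carrier H - {\<one>\<^bsub>H\<^esub>} \<lesssim> {c. fp_letter G H c}"
    unfolding lepoll_def by (intro exI[of _ Inr]) (auto simp: fp_letter_def)
  then have "insert \<one>\<^bsub>H\<^esub> (carrier H - {\<one>\<^bsub>H\<^esub>}) \<lesssim> X"
    using assms(3,4) by (blast intro: insert_lepoll_infinite lepoll_trans)
  then show "carrier H \<lesssim> X"
    by (metis assms(2) group.is_monoid insert_Diff monoid.one_closed)
qed

context
  fixes G :: "('a,'c) monoid_scheme" and H :: "('b,'d) monoid_scheme"
  assumes G: "group G" and H: "group H"
begin

lemma fp_letter_inv_letter: "fp_letter G H x \<Longrightarrow> fp_letter G H (inv_letter G H x)"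
  using G H by (cases x) (auto simp: inv_letter_def fp_letter_def group.inv_eq_1_iff)

lemma inv_letter_inv_letter: "fp_letter G H x \<Longrightarrow> inv_letter G H (inv_letter G H x) = x"
  using G H by (cases x) (auto simp: inv_letter_def fp_letter_def)

lemma fp_cons_inv_letter: "fp_letter G H x \<Longrightarrow> fp_cons G H (inv_letter G H x) (x # w) = w"
  using G H by (cases x) (auto simp: inv_letter_def fp_letter_def group.l_inv)

lemma fp_letters_inv_word:
  "\<forall>x\<in>set w. fp_letter G H x \<Longrightarrow> \<forall>x\<in>set (inv_word G H w). fp_letter G H x"
  by (auto simp: inv_word_def fp_letter_inv_letter)

lemma inv_word_inv_word: "\<forall>x\<in>set w. fp_letter G H x \<Longrightarrow> inv_word G H (inv_word G H w) = w"
  by (induction w) (auto simp: inv_word_def inv_letter_inv_letter)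

lemma inv_word_mult_append:
  "\<forall>x\<in>set w. fp_letter G H x \<Longrightarrow> inv_word G H w \<otimes>\<^bsub>free_product G H\<^esub> (w @ v) = v"
  by (induction w) (auto simp: mult_free_product inv_word_def fp_cons_inv_letter)

lemma mult_inv_word:
  assumes "\<forall>x\<in>set w. fp_letter G H x"
  shows "w \<otimes>\<^bsub>free_product G H\<^esub> inv_word G H w = \<one>\<^bsub>free_product G H\<^esub>"
  using inv_word_mult_append[OF fp_letters_inv_word[OF assms], of "[]"]
  by (simp add: inv_word_inv_word[OF assms] one_free_product)

lemma mult_eq_append:
  "\<lbrakk>\<forall>x\<in>set w. fp_letter G H x; alternating (w @ v)\<rbrakk>
   \<Longrightarrow> w \<otimes>\<^bsub>free_product G H\<^esub> v = w @ v"
proof (induction w)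
  case (Cons x w)
  then have IH: "foldr (fp_cons G H) w v = w @ v"
    by (cases "w @ v") (auto simp: mult_free_product)
  show ?case
    using IH Cons.prems
    by (cases "w @ v"; cases x; cases "hd (w @ v)") (auto simp: mult_free_product fp_letter_def)
qed (simp add: mult_free_product)

lemma mult_self_eq_append:
  assumes "fp_reduced G H w" "w \<noteq> []" "isl (hd w) \<noteq> isl (last w)"
  shows "w \<otimes>\<^bsub>free_product G H\<^esub> w = w @ w"
  using assms by (intro mult_eq_append) (auto simp: fp_reduced_iff successively_append_iff)

lemma fp_reduced_conjugate:
  assumes "fp_reduced G H (w @ [t])"
  shows "fp_reduced G H (w @ [t] @ inv_word G H w)"
proof -
  have alt: "alternating (w @ [t])" and "w \<noteq> [] \<Longrightarrow> isl (last w) \<noteq> isl t"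
    using assms by (auto simp: fp_reduced_iff successively_append_iff)
  moreover have "alternating (inv_word G H w)"
    using alt by (simp only: alternating_inv_word successively_append_iff)
  ultimately have "alternating ((w @ [t]) @ inv_word G H w)"
    unfolding successively_append_iff[of _ "w @ [t]"]
    by (auto simp: hd_inv_word)
  then show ?thesis
    using assms fp_letters_inv_word by (auto simp: fp_reduced_iff)
qed

lemma inv_word_conjugate:
  assumes "\<forall>x\<in>set w. fp_letter G H x" "inv_letter G H t = t"
  shows "inv_word G H (w @ [t] @ inv_word G H w) = w @ [t] @ inv_word G H w"
  using assms by (simp add: inv_word_inv_word)

lemma involution_letterE:
  assumes "(\<exists>x\<in>carrier G. x \<noteq> \<one>\<^bsub>G\<^esub> \<and> x \<otimes>\<^bsub>G\<^esub> x = \<one>\<^bsub>G\<^esub>)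
    \<or> (\<exists>y\<in>carrier H. y \<noteq> \<one>\<^bsub>H\<^esub> \<and> y \<otimes>\<^bsub>H\<^esub> y = \<one>\<^bsub>H\<^esub>)"
  obtains t where "fp_letter G H t" "inv_letter G H t = t"
  using assms
proof (elim disjE bexE conjE)
  fix x assume "x \<in> carrier G" "x \<noteq> \<one>\<^bsub>G\<^esub>" "x \<otimes>\<^bsub>G\<^esub> x = \<one>\<^bsub>G\<^esub>"
  then show thesis
    by (intro that[of "Inl x"]) (simp_all add: fp_letter_def inv_letter_def group.inv_equality[OF G])
next
  fix y assume "y \<in> carrier H" "y \<noteq> \<one>\<^bsub>H\<^esub>" "y \<otimes>\<^bsub>H\<^esub> y = \<one>\<^bsub>H\<^esub>"
  then show thesis
    by (intro that[of "Inr y"]) (simp_all add: fp_letter_def inv_letter_def group.inv_equality[OF H])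
qed

lemma fp_cyclic_words_subset_non_involutions:
  "fp_cyclic_words G H p
   \<subseteq> {w \<in> carrier (free_product G H). w \<otimes>\<^bsub>free_product G H\<^esub> w \<noteq> \<one>\<^bsub>free_product G H\<^esub>}"
  using mult_self_eq_append
  by (auto simp: fp_cyclic_words_def carrier_free_product one_free_product)

lemma fp_cyclic_words_lepoll_involutions:
  assumes "fp_letter G H t" "inv_letter G H t = t" "isl t = p"
  shows "fp_cyclic_words G H p
    \<lesssim> {w \<in> carrier (free_product G H). w \<otimes>\<^bsub>free_product G H\<^esub> w = \<one>\<^bsub>free_product G H\<^esub>}"
  unfolding lepoll_def
proof (intro exI conjI)
  let ?c = "\<lambda>w. w @ [t] @ inv_word G H w"
  show "inj_on ?c (fp_cyclic_words G H p)"
  proof (rule inj_onI)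
    fix u v assume "?c u = ?c v"
    moreover from this have "length u = length v"
      by (drule_tac arg_cong[of _ _ length]) simp
    ultimately show "u = v" by simp
  qed
  show "?c ` fp_cyclic_words G H p
    \<subseteq> {w \<in> carrier (free_product G H). w \<otimes>\<^bsub>free_product G H\<^esub> w = \<one>\<^bsub>free_product G H\<^esub>}"
  proof (rule image_subsetI)
    fix w assume "w \<in> fp_cyclic_words G H p"
    then have "fp_reduced G H (w @ [t])"
      using assms by (auto simp: fp_cyclic_words_def fp_reduced_iff successively_append_iff)
    then have red: "fp_reduced G H (?c w)" by (rule fp_reduced_conjugate)
    then have letters: "\<forall>x\<in>set (?c w). fp_letter G H x" by (simp add: fp_reduced_iff)
    have "inv_word G H (?c w) = ?c w"
      using letters assms(2) by (intro inv_word_conjugate) simp_all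
    then have "?c w \<otimes>\<^bsub>free_product G H\<^esub> ?c w
        = ?c w \<otimes>\<^bsub>free_product G H\<^esub> inv_word G H (?c w)"
      by (simp only:)
    also have "\<dots> = \<one>\<^bsub>free_product G H\<^esub>" using letters by (rule mult_inv_word)
    finally show "?c w \<in> {w \<in> carrier (free_product G H).
      w \<otimes>\<^bsub>free_product G H\<^esub> w = \<one>\<^bsub>free_product G H\<^esub>}"
      using red by (simp add: carrier_free_product)
  qed
qed

end

lemma cardinality_if_fp_cyclic_words_lepoll:
  assumes G: "group G" and H: "group H"
    and "carrier G \<noteq> {\<one>\<^bsub>G\<^esub>}" "carrier H \<noteq> {\<one>\<^bsub>H\<^esub>}"
    and "fp_cyclic_words G H p \<lesssim> X" "X \<subseteq> carrier (free_product G H)"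
  shows "(UNIV::nat set) \<lesssim> X \<and> carrier G \<lesssim> X \<and> carrier H \<lesssim> X
    \<and> (X \<approx> (UNIV::nat set) \<or> X \<approx> carrier G \<or> X \<approx> carrier H)"
proof -
  obtain a where "a \<in> carrier G" "a \<noteq> \<one>\<^bsub>G\<^esub>"
    using assms(3) monoid.one_closed[OF group.is_monoid[OF G]] by blast
  moreover obtain b where "b \<in> carrier H" "b \<noteq> \<one>\<^bsub>H\<^esub>"
    using assms(4) monoid.one_closed[OF group.is_monoid[OF H]] by blast
  ultimately have "fp_letter G H (Inl a)" "fp_letter G H (Inr b)"
    by (simp_all add: fp_letter_def)
  then obtain x y where letters: "fp_letter G H x" "fp_letter G H y" "isl x = p" "isl y \<noteq> p"
    by (cases p) (fastforce+)
  have nat: "(UNIV::nat set) \<lesssim> X"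
    using nat_lepoll_fp_cyclic_words[OF letters] assms(5) by (rule lepoll_trans)
  have "{c. fp_letter G H c} \<lesssim> X"
    using fp_letters_lepoll_fp_cyclic_words[OF letters] assms(5) by (rule lepoll_trans)
  then have factors: "carrier G \<lesssim> X" "carrier H \<lesssim> X"
    using carrier_lepoll_if_fp_letters_lepoll[OF G H] nat infinite_le_lepoll by blast+
  have "X \<lesssim> lists (carrier G <+> carrier H)"
    using assms(6) carrier_free_product_subset_lists by (blast intro: subset_imp_lepoll)
  then show ?thesis
    using nat factors eqpoll_max_nat_if_between_lists_Plus by blast
qed

theorem lemma20:
  fixes G :: "('a,'c) monoid_scheme" and H :: "('b,'d) monoid_scheme"
  assumes "group G" and "group H"
    and "carrier G \<noteq> {\<one>\<^bsub>G\<^esub>}" and "carrier H \<noteq> {\<one>\<^bsub>H\<^esub>}"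
  defines "F \<equiv> free_product G H"
  defines "S \<equiv> {x \<in> carrier F. x \<otimes>\<^bsub>F\<^esub> x \<noteq> \<one>\<^bsub>F\<^esub>}"
  defines "T \<equiv> {x \<in> carrier F. x \<otimes>\<^bsub>F\<^esub> x = \<one>\<^bsub>F\<^esub>}"
  shows "((UNIV::nat set) \<lesssim> S \<and> carrier G \<lesssim> S \<and> carrier H \<lesssim> S
          \<and> (S \<approx> (UNIV::nat set) \<or> S \<approx> carrier G \<or> S \<approx> carrier H))
       \<and> ((\<exists>x\<in>carrier G. x \<noteq> \<one>\<^bsub>G\<^esub> \<and> x \<otimes>\<^bsub>G\<^esub> x = \<one>\<^bsub>G\<^esub>)
            \<or> (\<exists>y\<in>carrier H. y \<noteq> \<one>\<^bsub>H\<^esub> \<and> y \<otimes>\<^bsub>H\<^esub> y = \<one>\<^bsub>H\<^esub>)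
          \<longrightarrow> ((UNIV::nat set) \<lesssim> T \<and> carrier G \<lesssim> T \<and> carrier H \<lesssim> T
               \<and> (T \<approx> (UNIV::nat set) \<or> T \<approx> carrier G \<or> T \<approx> carrier H)))"
proof (rule conjI[OF _ impI])
  note cardinality = cardinality_if_fp_cyclic_words_lepoll[OF assms(1-4)]
  have "fp_cyclic_words G H True \<lesssim> S"
    unfolding S_def F_def using fp_cyclic_words_subset_non_involutions[OF assms(1,2)]
    by (rule subset_imp_lepoll)
  then show "(UNIV::nat set) \<lesssim> S \<and> carrier G \<lesssim> S \<and> carrier H \<lesssim> S
          \<and> (S \<approx> (UNIV::nat set) \<or> S \<approx> carrier G \<or> S \<approx> carrier H)"
    by (rule cardinality) (auto simp: S_def F_def)
  assume "(\<exists>x\<in>carrier G. x \<noteq> \<one>\<^bsub>G\<^esub> \<and> x \<otimes>\<^bsub>G\<^esub> x = \<one>\<^bsub>G\<^esub>)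
            \<or> (\<exists>y\<in>carrier H. y \<noteq> \<one>\<^bsub>H\<^esub> \<and> y \<otimes>\<^bsub>H\<^esub> y = \<one>\<^bsub>H\<^esub>)"
  then obtain t where "fp_letter G H t" "inv_letter G H t = t"
    by (rule involution_letterE[OF assms(1,2)])
  then have "fp_cyclic_words G H (isl t) \<lesssim> T"
    unfolding T_def F_def by (rule fp_cyclic_words_lepoll_involutions[OF assms(1,2)]) simp
  then show "(UNIV::nat set) \<lesssim> T \<and> carrier G \<lesssim> T \<and> carrier H \<lesssim> T
               \<and> (T \<approx> (UNIV::nat set) \<or> T \<approx> carrier G \<or> T \<approx> carrier H)"
    by (rule cardinality) (auto simp: T_def F_def)
qed

end
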